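(* Let $\alpha>3$ be an integer, and let $u\in\mathcal{D}(A^{\alpha/2})$, $v\in\mathcal{D}(A^{(\alpha+1)/2})$, $w\in\mathcal{D}(A^{\alpha})$. Then $$|(B(u,v),A^\alpha w)|\le 2^\alpha c_A\Big(|u|^{1/2}|Au|^{1/2}|A^{\frac{1+\alpha}{2}}v|+|A^{\alpha/2}u|\,|A^{1/2}v|^{1/2}|A^{3/2}v|^{1/2}\Big)|A^{\alpha/2}w|.$$
   Context: $H$ is the closure in $L^2([0,L]^2)^2$ of the $\mathbb{R}^2$-valued $[0,L]^2$-periodic trigonometric polynomials $v$ with $\nabla\cdot v=0$ and zero mean, with $L^2$ inner product $(\cdot,\cdot)$ and norm $|\cdot|$; $A=-\Delta$ is the Stokes operator with spectrally defined powers and domains $\mathcal{D}(A^\sigma)$; $B(u,v)=\mathcal{P}((u\cdot\nabla)v)$ with $\mathcal{P}$ the Leray projection. $c_A$ is an absolute constant for which the Agmon inequality $|u|_{L^\infty}\le c_A|u|^{1/2}|Au|^{1/2}$ holds for periodic mean-zero functions $u$ in the domain of $A=-\Delta$. *)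

theory Defs
  imports "HOL-Analysis.Analysis"
begin

text \<open>
Fourier representation on the torus [0,L]^2. A (possibly complex) periodic
R^2-valued field f is represented by its Fourier coefficients
c :: int*int => complex*complex, f(x) = sum_k c k * exp(2 pi i k.x / L).
\<close>

type_synonym coef = "int \<times> int \<Rightarrow> complex \<times> complex"

definition lam :: "real \<Rightarrow> int \<times> int \<Rightarrow> real" where
  "lam L k = (2 * pi / L)^2 * (real_of_int (fst k)^2 + real_of_int (snd k)^2)"

text \<open>Spectral powers of the Stokes operator A = -Delta.\<close>
definition Apow :: "real \<Rightarrow> real \<Rightarrow> coef \<Rightarrow> coef" where
  "Apow L s c = (\<lambda>k. (lam L k powr s) *\<^sub>R c k)"

definition sq_summable :: "coef \<Rightarrow> bool" where
  "sq_summable c \<longleftrightarrow> (\<lambda>k. (norm (c k))^2) summable_on UNIV"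

text \<open>L^2([0,L]^2) norm (Parseval; |e_k|_{L^2}^2 = L^2).\<close>
definition hnorm :: "real \<Rightarrow> coef \<Rightarrow> real" where
  "hnorm L c = sqrt (L^2 * infsum (\<lambda>k. (norm (c k))^2) UNIV)"

text \<open>L^2 inner product (f,g) = integral of f.conj g over [0,L]^2.\<close>
definition l2inner :: "real \<Rightarrow> coef \<Rightarrow> coef \<Rightarrow> complex" where
  "l2inner L f g = complex_of_real (L^2) *
     infsum (\<lambda>k. fst (f k) * cnj (fst (g k)) + snd (f k) * cnj (snd (g k))) UNIV"

definition real_valued :: "coef \<Rightarrow> bool" where
  "real_valued c \<longleftrightarrow> (\<forall>a b. c (-a, -b) = (cnj (fst (c (a, b))), cnj (snd (c (a, b)))))"

text \<open>Membership in H: L^2, zero mean, divergence free, real valued.\<close>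
definition inH :: "coef \<Rightarrow> bool" where
  "inH c \<longleftrightarrow> sq_summable c \<and> c (0, 0) = (0, 0) \<and> real_valued c \<and>
     (\<forall>k. of_int (fst k) * fst (c k) + of_int (snd k) * snd (c k) = 0)"

definition inDom :: "real \<Rightarrow> real \<Rightarrow> coef \<Rightarrow> bool" where
  "inDom L s c \<longleftrightarrow> inH c \<and> sq_summable (Apow L s c)"

definition ef :: "real \<Rightarrow> int \<times> int \<Rightarrow> real \<times> real \<Rightarrow> complex" where
  "ef L k x = exp (2 * pi * \<i> * complex_of_real
       ((real_of_int (fst k) * fst x + real_of_int (snd k) * snd x) / L))"

definition feval :: "real \<Rightarrow> coef \<Rightarrow> real \<times> real \<Rightarrow> complex \<times> complex" where
  "feval L c x = (infsum (\<lambda>k. ef L k x * fst (c k)) UNIV,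
                  infsum (\<lambda>k. ef L k x * snd (c k)) UNIV)"

definition agmon_const :: "real \<Rightarrow> real \<Rightarrow> bool" where
  "agmon_const L cA \<longleftrightarrow>
     (\<forall>c. c (0, 0) = (0, 0) \<and> real_valued c \<and> sq_summable c \<and> sq_summable (Apow L 1 c) \<longrightarrow>
        (\<forall>x. norm (feval L c x) \<le> cA * sqrt (hnorm L c) * sqrt (hnorm L (Apow L 1 c))))"

text \<open>Fourier coefficients of (u.grad) v:
  sum over j + l = k of (sum_m u_m(j) * (2 pi i l_m / L)) * v(l).\<close>
definition advect :: "real \<Rightarrow> coef \<Rightarrow> coef \<Rightarrow> coef" where
  "advect L u v k =
    (let a = (\<lambda>j. let l = (fst k - fst j, snd k - snd j) in
               (fst (u j) * (2 * pi * \<i> * of_int (fst l) / L)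
                + snd (u j) * (2 * pi * \<i> * of_int (snd l) / L), v l))
     in (infsum (\<lambda>j. fst (a j) * fst (snd (a j))) UNIV,
         infsum (\<lambda>j. fst (a j) * snd (snd (a j))) UNIV))"

definition leray :: "coef \<Rightarrow> coef" where
  "leray f k = (if k = (0, 0) then (0, 0) else
     (let p = (of_int (fst k) * fst (f k) + of_int (snd k) * snd (f k))
              / of_int ((fst k)^2 + (snd k)^2)
      in (fst (f k) - p * of_int (fst k), snd (f k) - p * of_int (snd k))))"

definition Bop :: "real \<Rightarrow> coef \<Rightarrow> coef \<Rightarrow> coef" where
  "Bop L u v = leray (advect L u v)"

end

theory Submission
  imports Defs
begin

text \<open>
  The estimate is proved on the Fourier side, with \<open>\<kappa>(k) = \<lambda>(k)\<^sup>1\<^sup>/\<^sup>2 = (2\<pi>/L)|k|\<close>.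
  The Leray projection does not increase any Fourier coefficient, so the \<open>k\<close>-th coefficient of
  \<open>B(u,v)\<close> is bounded by the convolution \<open>\<Sum>j. |u(j)| \<kappa>(k-j) |v(k-j)|\<close> of the moduli of \<open>u\<close> and
  \<open>A\<^sup>1\<^sup>/\<^sup>2v\<close>. Writing \<open>A\<^sup>\<alpha> w = A\<^sup>\<alpha>\<^sup>/\<^sup>2 A\<^sup>\<alpha>\<^sup>/\<^sup>2 w\<close> puts the weight \<open>\<kappa>(k)\<^sup>\<alpha>\<close> on this convolution, and
  the triangle inequality \<open>\<kappa>(k) \<le> \<kappa>(j) + \<kappa>(k-j)\<close> gives
  \<open>\<kappa>(k)\<^sup>\<alpha> \<le> 2\<^sup>\<alpha> (\<kappa>(j)\<^sup>\<alpha> + \<kappa>(k-j)\<^sup>\<alpha>)\<close>, moving the weight onto one of the two factors.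
  Each of the two resulting terms is an \<open>\<ell>\<^sup>1 * \<ell>\<^sup>2\<close> convolution tested against an \<open>\<ell>\<^sup>2\<close>
  sequence, bounded by Young's and the Cauchy-Schwarz inequality. The \<open>\<ell>\<^sup>1\<close> norms of the
  coefficients of \<open>u\<close> and \<open>A\<^sup>1\<^sup>/\<^sup>2v\<close> come from Agmon's inequality: applied to the real function
  whose coefficients are \<open>|c(k)|\<close> and evaluated at the origin, it bounds \<open>\<Sum>k. |c(k)|\<close> by
  \<open>c\<^sub>A |c|\<^sup>1\<^sup>/\<^sup>2 |Ac|\<^sup>1\<^sup>/\<^sup>2\<close>.
\<close>

section \<open>Sums and convolutions over an abelian group\<close>

lemma has_sum_finite_sum:
  fixes h :: "'i \<Rightarrow> 'a \<Rightarrow> 'b::topological_comm_monoid_add"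
  assumes "finite I" and "\<And>i. i \<in> I \<Longrightarrow> (h i has_sum s i) A"
  shows "((\<lambda>x. \<Sum>i\<in>I. h i x) has_sum (\<Sum>i\<in>I. s i)) A"
  using assms by (induction I rule: finite_induct) (auto intro: has_sum_add)

lemma nonneg_bounded_sums_summable_on:
  fixes f :: "'a \<Rightarrow> real"
  assumes "\<And>x. f x \<ge> 0" and "\<And>F. finite F \<Longrightarrow> sum f F \<le> B"
  shows "f summable_on UNIV" and "(\<Sum>\<^sub>\<infinity>x. f x) \<le> B"
proof -
  show sf: "f summable_on UNIV"
    using assms by (intro nonneg_bdd_above_summable_on bdd_aboveI) auto
  show "(\<Sum>\<^sub>\<infinity>x. f x) \<le> B"
    by (rule infsum_le_finite_sums[OF sf]) (use assms in auto)
qed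

lemma le_sqrt_infsum_power2:
  fixes g :: "'a \<Rightarrow> real"
  assumes "(\<lambda>x. (g x)\<^sup>2) summable_on UNIV"
  shows "g x \<le> sqrt (\<Sum>\<^sub>\<infinity>y. (g y)\<^sup>2)"
proof -
  have "(g x)\<^sup>2 \<le> (\<Sum>\<^sub>\<infinity>y. (g y)\<^sup>2)"
    using finite_sum_le_infsum[OF assms, of "{x}"] by simp
  then show ?thesis by (rule real_le_rsqrt)
qed

definition convolution :: "('a::ab_group_add \<Rightarrow> real) \<Rightarrow> ('a \<Rightarrow> real) \<Rightarrow> 'a \<Rightarrow> real" where
  "convolution f g k = (\<Sum>\<^sub>\<infinity>j. f j * g (k - j))"

lemma bij_betw_diff_left: "bij_betw (\<lambda>j. k - j) UNIV (UNIV :: 'a::ab_group_add set)"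
  by (rule bij_betwI[where g="\<lambda>j. k - j"]) auto

lemma summable_on_convolution_commute:
  fixes f g :: "'a::ab_group_add \<Rightarrow> real"
  shows "(\<lambda>j. f j * g (k - j)) summable_on UNIV \<longleftrightarrow> (\<lambda>j. g j * f (k - j)) summable_on UNIV"
proof -
  from summable_on_reindex_bij_betw[OF bij_betw_diff_left[of k], of "\<lambda>j. f j * g (k - j)"]
  show ?thesis by (simp add: mult.commute)
qed

lemma convolution_commute: "convolution f g = convolution g f"
proof
  fix k
  from infsum_reindex_bij_betw[OF bij_betw_diff_left[of k], of "\<lambda>j. f j * g (k - j)"]
  show "convolution f g k = convolution g f k"
    unfolding convolution_def by (simp add: mult.commute)
qed

lemma summable_on_convolution:
  fixes f g :: "'a::ab_group_add \<Rightarrow> real"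
  assumes "f summable_on UNIV" and "\<And>x. f x \<ge> 0" and "\<And>x. g x \<ge> 0" and "\<And>x. g x \<le> C"
  shows "(\<lambda>j. f j * g (k - j)) summable_on UNIV"
proof (rule summable_on_comparison_test)
  show "(\<lambda>j. f j * C) summable_on UNIV" using assms(1) by (rule summable_on_cmult_left)
  show "f j * g (k - j) \<le> f j * C" for j using assms by (simp add: mult_left_mono)
  show "0 \<le> f j * g (k - j)" for j using assms by simp
qed

lemma sum_mult_shift_le:
  fixes g W :: "'a::ab_group_add \<Rightarrow> real"
  assumes g: "(\<lambda>x. (g x)\<^sup>2) summable_on UNIV" and W: "(\<lambda>x. (W x)\<^sup>2) summable_on UNIV"
    and K: "finite K"
  shows "(\<Sum>k\<in>K. W k * g (k - j)) \<le> sqrt (\<Sum>\<^sub>\<infinity>x. (g x)\<^sup>2) * sqrt (\<Sum>\<^sub>\<infinity>x. (W x)\<^sup>2)"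
proof -
  have "(\<Sum>k\<in>K. (g (k - j))\<^sup>2) = (\<Sum>l\<in>(\<lambda>k. k - j) ` K. (g l)\<^sup>2)"
    by (subst sum.reindex) (auto simp: inj_on_def)
  also have "\<dots> \<le> (\<Sum>\<^sub>\<infinity>x. (g x)\<^sup>2)"
    by (rule finite_sum_le_infsum) (use g K in auto)
  finally have gK: "(\<Sum>k\<in>K. (g (k - j))\<^sup>2) \<le> (\<Sum>\<^sub>\<infinity>x. (g x)\<^sup>2)" .
  have WK: "(\<Sum>k\<in>K. (W k)\<^sup>2) \<le> (\<Sum>\<^sub>\<infinity>x. (W x)\<^sup>2)"
    by (rule finite_sum_le_infsum) (use W K in auto)
  have "(\<Sum>k\<in>K. W k * g (k - j))\<^sup>2 \<le> (\<Sum>k\<in>K. (W k)\<^sup>2) * (\<Sum>k\<in>K. (g (k - j))\<^sup>2)"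
    by (rule Cauchy_Schwarz_ineq_sum)
  also have "\<dots> \<le> (\<Sum>\<^sub>\<infinity>x. (W x)\<^sup>2) * (\<Sum>\<^sub>\<infinity>x. (g x)\<^sup>2)"
    by (intro mult_mono WK gK) (auto intro: sum_nonneg infsum_nonneg)
  finally show ?thesis
    by (metis mult.commute real_le_rsqrt real_sqrt_mult)
qed

text \<open>Young's inequality \<open>\<ell>\<^sup>1 * \<ell>\<^sup>2 \<subseteq> \<ell>\<^sup>2\<close>, tested against an \<open>\<ell>\<^sup>2\<close> sequence.\<close>
lemma sum_mult_convolution_le:
  fixes f g W :: "'a::ab_group_add \<Rightarrow> real"
  assumes f: "f summable_on UNIV" "\<And>x. f x \<ge> 0"
    and g: "(\<lambda>x. (g x)\<^sup>2) summable_on UNIV" "\<And>x. g x \<ge> 0"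
    and W: "(\<lambda>x. (W x)\<^sup>2) summable_on UNIV" and K: "finite K"
  shows "(\<Sum>k\<in>K. W k * convolution f g k)
     \<le> (\<Sum>\<^sub>\<infinity>x. f x) * (sqrt (\<Sum>\<^sub>\<infinity>x. (g x)\<^sup>2) * sqrt (\<Sum>\<^sub>\<infinity>x. (W x)\<^sup>2))"
    (is "_ \<le> _ * ?C")
proof -
  have "(\<lambda>j. f j * g (k - j)) summable_on UNIV" for k
    by (rule summable_on_convolution[OF f g(2) le_sqrt_infsum_power2[OF g(1)]])
  then have "((\<lambda>j. W k * (f j * g (k - j))) has_sum W k * convolution f g k) UNIV" for k
    unfolding convolution_def by (intro has_sum_cmult_right has_sum_infsum)
  then have "((\<lambda>j. \<Sum>k\<in>K. W k * (f j * g (k - j))) has_sum (\<Sum>k\<in>K. W k * convolution f g k)) UNIV"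
    by (rule has_sum_finite_sum[OF K])
  moreover have "((\<lambda>j. f j * ?C) has_sum (\<Sum>\<^sub>\<infinity>x. f x) * ?C) UNIV"
    using f(1) by (intro has_sum_cmult_left has_sum_infsum)
  moreover have "(\<Sum>k\<in>K. W k * (f j * g (k - j))) \<le> f j * ?C" for j
  proof -
    have "(\<Sum>k\<in>K. W k * (f j * g (k - j))) = f j * (\<Sum>k\<in>K. W k * g (k - j))"
      by (simp add: sum_distrib_left algebra_simps)
    also have "\<dots> \<le> f j * ?C"
      by (intro mult_left_mono sum_mult_shift_le g(1) W K f(2))
    finally show ?thesis .
  qed
  ultimately show ?thesis by (rule has_sum_mono)
qed

lemma pow_le_two_pow_mult_add:
  fixes x a b :: real
  assumes "0 \<le> a" "0 \<le> b" "0 \<le> x" "x \<le> a + b"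
  shows "x ^ n \<le> 2 ^ n * (a ^ n + b ^ n)"
proof -
  have "x ^ n \<le> (2 * max a b) ^ n" using assms by (intro power_mono) auto
  also have "\<dots> = 2 ^ n * max a b ^ n" by (simp add: power_mult_distrib)
  also have "max a b ^ n \<le> a ^ n + b ^ n" using assms by (cases "a \<le> b") (auto simp: max_def)
  finally show ?thesis by simp
qed

lemma pow_mult_convolution_le:
  fixes m U Q :: "'a::ab_group_add \<Rightarrow> real"
  assumes m: "\<And>k. m k \<ge> 0" "\<And>k j. m k \<le> m j + m (k - j)"
    and nonneg: "\<And>k. U k \<ge> 0" "\<And>k. Q k \<ge> 0"
    and UQ: "(\<lambda>j. U j * Q (k - j)) summable_on UNIV"
    and PQ: "(\<lambda>j. m j ^ n * U j * Q (k - j)) summable_on UNIV"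
    and UR: "(\<lambda>j. U j * (m (k - j) ^ n * Q (k - j))) summable_on UNIV"
  shows "m k ^ n * convolution U Q k
    \<le> 2 ^ n * (convolution (\<lambda>j. m j ^ n * U j) Q k + convolution U (\<lambda>j. m j ^ n * Q j) k)"
proof -
  have "((\<lambda>j. m k ^ n * (U j * Q (k - j))) has_sum m k ^ n * convolution U Q k) UNIV"
    unfolding convolution_def by (intro has_sum_cmult_right has_sum_infsum UQ)
  moreover have "((\<lambda>j. 2 ^ n * (m j ^ n * U j * Q (k - j) + U j * (m (k - j) ^ n * Q (k - j))))
      has_sum 2 ^ n * (convolution (\<lambda>j. m j ^ n * U j) Q k
                       + convolution U (\<lambda>j. m j ^ n * Q j) k)) UNIV"
    unfolding convolution_def by (intro has_sum_cmult_right has_sum_add has_sum_infsum PQ UR)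
  moreover have "m k ^ n * (U j * Q (k - j))
      \<le> 2 ^ n * (m j ^ n * U j * Q (k - j) + U j * (m (k - j) ^ n * Q (k - j)))" for j
  proof -
    have "m k ^ n \<le> 2 ^ n * (m j ^ n + m (k - j) ^ n)"
      by (rule pow_le_two_pow_mult_add) (use m in auto)
    then have "m k ^ n * (U j * Q (k - j)) \<le> 2 ^ n * (m j ^ n + m (k - j) ^ n) * (U j * Q (k - j))"
      by (rule mult_right_mono) (simp add: nonneg)
    then show ?thesis by (simp add: algebra_simps)
  qed
  ultimately show ?thesis by (rule has_sum_mono)
qed

text \<open>A Kato-Ponce type product estimate: the weight \<open>m\<^sup>n\<close> of the convolution is moved onto one
  factor at a time.\<close>
lemma sum_mult_weighted_convolution_le:
  fixes m U Q W :: "'a::ab_group_add \<Rightarrow> real"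
  assumes m: "\<And>k. m k \<ge> 0" "\<And>k j. m k \<le> m j + m (k - j)"
    and U: "U summable_on UNIV" "\<And>k. U k \<ge> 0" "(\<lambda>k. (m k ^ n * U k)\<^sup>2) summable_on UNIV"
    and Q: "Q summable_on UNIV" "\<And>k. Q k \<ge> 0" "(\<lambda>k. (m k ^ n * Q k)\<^sup>2) summable_on UNIV"
    and W: "(\<lambda>k. (W k)\<^sup>2) summable_on UNIV" "\<And>k. W k \<ge> 0"
    and K: "finite K"
  shows "(\<Sum>k\<in>K. W k * (m k ^ n * convolution U Q k))
    \<le> 2 ^ n * ((\<Sum>\<^sub>\<infinity>k. Q k) * sqrt (\<Sum>\<^sub>\<infinity>k. (m k ^ n * U k)\<^sup>2)
                + (\<Sum>\<^sub>\<infinity>k. U k) * sqrt (\<Sum>\<^sub>\<infinity>k. (m k ^ n * Q k)\<^sup>2)) * sqrt (\<Sum>\<^sub>\<infinity>k. (W k)\<^sup>2)"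
proof -
  define P R where "P k = m k ^ n * U k" and "R k = m k ^ n * Q k" for k
  have P0: "P k \<ge> 0" and R0: "R k \<ge> 0" for k
    unfolding P_def R_def using m U Q by simp_all
  have P2: "(\<lambda>k. (P k)\<^sup>2) summable_on UNIV" and R2: "(\<lambda>k. (R k)\<^sup>2) summable_on UNIV"
    unfolding P_def R_def by (fact U(3) Q(3))+
  have "Q k \<le> (\<Sum>\<^sub>\<infinity>k. Q k)" for k
    using finite_sum_le_infsum[OF Q(1), of "{k}"] Q(2) by simp
  then have "(\<lambda>j. U j * Q (k - j)) summable_on UNIV" for k
    by (rule summable_on_convolution[OF U(1,2) Q(2)])
  moreover have "(\<lambda>j. P j * Q (k - j)) summable_on UNIV" for k
    using summable_on_convolution[OF Q(1,2) P0 le_sqrt_infsum_power2[OF P2]]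
    by (subst summable_on_convolution_commute)
  moreover have "(\<lambda>j. U j * R (k - j)) summable_on UNIV" for k
    by (rule summable_on_convolution[OF U(1,2) R0 le_sqrt_infsum_power2[OF R2]])
  ultimately have "m k ^ n * convolution U Q k \<le> 2 ^ n * (convolution Q P k + convolution U R k)"
    for k
    using pow_mult_convolution_le[where m=m and U=U and Q=Q and k=k and n=n, OF m U(2) Q(2)]
      convolution_commute[of P Q]
    unfolding P_def R_def by (simp add: mult.assoc)
  then have "W k * (m k ^ n * convolution U Q k)
      \<le> W k * (2 ^ n * (convolution Q P k + convolution U R k))" for k
    by (rule mult_left_mono) (rule W(2))
  then have "(\<Sum>k\<in>K. W k * (m k ^ n * convolution U Q k))
      \<le> 2 ^ n * ((\<Sum>k\<in>K. W k * convolution Q P k) + (\<Sum>k\<in>K. W k * convolution U R k))"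
    by (simp add: sum_mono sum_distrib_left sum.distrib[symmetric] algebra_simps)
  also have "\<dots> \<le> 2 ^ n * ((\<Sum>\<^sub>\<infinity>k. Q k) * (sqrt (\<Sum>\<^sub>\<infinity>k. (P k)\<^sup>2) * sqrt (\<Sum>\<^sub>\<infinity>k. (W k)\<^sup>2))
                + (\<Sum>\<^sub>\<infinity>k. U k) * (sqrt (\<Sum>\<^sub>\<infinity>k. (R k)\<^sup>2) * sqrt (\<Sum>\<^sub>\<infinity>k. (W k)\<^sup>2)))"
    by (intro mult_left_mono add_mono sum_mult_convolution_le U Q W K P0 R0 P2 R2) simp
  finally show ?thesis unfolding P_def R_def by (simp add: algebra_simps)
qed

section \<open>Spectral powers of the Stokes operator\<close>

definition wavenum :: "real \<Rightarrow> int \<times> int \<Rightarrow> real" where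
  "wavenum L k = sqrt (lam L k)"

lemma lam_nonneg: "lam L k \<ge> 0"
  unfolding lam_def by simp

lemma wavenum_nonneg: "wavenum L k \<ge> 0"
  unfolding wavenum_def by (simp add: lam_nonneg)

lemma wavenum_eq_norm:
  assumes "L > 0"
  shows "wavenum L k = 2 * pi / L * norm (real_of_int (fst k), real_of_int (snd k))"
  unfolding wavenum_def lam_def using assms by (simp add: real_sqrt_mult norm_Pair)

lemma wavenum_triangle:
  assumes "L > 0"
  shows "wavenum L k \<le> wavenum L j + wavenum L (k - j)"
proof -
  define r :: "int \<times> int \<Rightarrow> real \<times> real" where "r l = (real_of_int (fst l), real_of_int (snd l))" for l
  have "r k = r j + r (k - j)"
    by (simp add: r_def)
  then have "norm (r k) \<le> norm (r j) + norm (r (k - j))"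
    by (metis norm_triangle_ineq)
  then have "2 * pi / L * norm (r k) \<le> 2 * pi / L * (norm (r j) + norm (r (k - j)))"
    by (rule mult_left_mono) (use assms in simp)
  then show ?thesis
    unfolding wavenum_eq_norm[OF assms] r_def by (simp only: distrib_left)
qed

lemma lam_powr_half_nat:
  assumes "n > 0"
  shows "lam L k powr (real n / 2) = wavenum L k ^ n"
proof (cases "lam L k = 0")
  case True
  then show ?thesis using assms unfolding wavenum_def by simp
next
  case False
  then have "lam L k > 0" using lam_nonneg[of L k] by simp
  then show ?thesis
    unfolding wavenum_def by (simp add: powr_half_sqrt[symmetric] powr_realpow[symmetric] powr_powr)
qed

lemma norm_Apow: "norm (Apow L s c k) = lam L k powr s * norm (c k)"
  unfolding Apow_def by simp

lemma norm_Apow_half_nat: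
  assumes "n > 0"
  shows "norm (Apow L (real n / 2) c k) = wavenum L k ^ n * norm (c k)"
  unfolding norm_Apow lam_powr_half_nat[OF assms] ..

lemma Apow_Apow: "Apow L s (Apow L t c) = Apow L (s + t) c"
  unfolding Apow_def by (simp add: fun_eq_iff powr_add)

lemma hnorm_eq:
  assumes "L > 0"
  shows "hnorm L c = L * sqrt (\<Sum>\<^sub>\<infinity>k. (norm (c k))\<^sup>2)"
  unfolding hnorm_def using assms by (simp add: real_sqrt_mult)

lemma hnorm_nonneg: "hnorm L c \<ge> 0"
  unfolding hnorm_def by (simp add: infsum_nonneg)

lemma hnorm_mono:
  assumes "sq_summable c" and "\<And>k. norm (d k) \<le> norm (c k)"
  shows "hnorm L d \<le> hnorm L c"
proof -
  have c: "(\<lambda>k. (norm (c k))\<^sup>2) summable_on UNIV" using assms(1) unfolding sq_summable_def .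
  have le: "(norm (d k))\<^sup>2 \<le> (norm (c k))\<^sup>2" for k using assms(2)[of k] by (simp add: power_mono)
  have "(\<lambda>k. (norm (d k))\<^sup>2) summable_on UNIV"
    by (rule summable_on_comparison_test[OF c le]) simp
  then have "(\<Sum>\<^sub>\<infinity>k. (norm (d k))\<^sup>2) \<le> (\<Sum>\<^sub>\<infinity>k. (norm (c k))\<^sup>2)"
    by (rule infsum_mono[OF _ c le])
  then show ?thesis
    unfolding hnorm_def by (simp add: mult_left_mono)
qed

lemma sq_summable_Apow_mono:
  assumes "sq_summable c" and "sq_summable (Apow L b c)" and "0 \<le> a" and "a \<le> b"
  shows "sq_summable (Apow L a c)"
proof -
  have "(\<lambda>k. 2 * (norm (c k))\<^sup>2 + 2 * (norm (Apow L b c k))\<^sup>2) summable_on UNIV"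
    using assms(1,2) unfolding sq_summable_def by (intro summable_on_add summable_on_cmult_right)
  then show ?thesis unfolding sq_summable_def
  proof (rule summable_on_comparison_test)
    fix k
    have "lam L k powr a \<le> 1 + lam L k powr b"
    proof (cases "lam L k \<le> 1")
      case True
      then have "lam L k powr a \<le> 1" using assms(3) lam_nonneg[of L k] by (intro powr_le1) auto
      then show ?thesis using powr_ge_zero[of "lam L k" b] by linarith
    next
      case False
      then have "lam L k powr a \<le> lam L k powr b" using assms(4) by (intro powr_mono) auto
      then show ?thesis by linarith
    qed
    then have "norm (Apow L a c k) \<le> norm (c k) + norm (Apow L b c k)"
      unfolding norm_Apow using mult_right_mono[of _ _ "norm (c k)"] by (force simp: algebra_simps)
    then have "(norm (Apow L a c k))\<^sup>2 \<le> (norm (c k) + norm (Apow L b c k))\<^sup>2"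
      by (simp add: power_mono)
    also have "\<dots> \<le> 2 * (norm (c k))\<^sup>2 + 2 * (norm (Apow L b c k))\<^sup>2"
      using sum_squares_bound[of "norm (c k)" "norm (Apow L b c k)"]
      by (simp add: power2_eq_square algebra_simps)
    finally show "(norm (Apow L a c k))\<^sup>2 \<le> 2 * (norm (c k))\<^sup>2 + 2 * (norm (Apow L b c k))\<^sup>2" .
  qed simp
qed

lemma inDom_mono:
  assumes "inDom L s c" and "0 \<le> t" and "t \<le> s"
  shows "inDom L t c"
  using assms sq_summable_Apow_mono unfolding inDom_def inH_def by blast

lemma inDom_Apow:
  assumes "inDom L s c" and "0 \<le> t" and "t \<le> s"
  shows "inDom L (s - t) (Apow L t c)"
proof -
  have c: "sq_summable c" "c (0, 0) = (0, 0)" "real_valued c"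
    "\<And>k. of_int (fst k) * fst (c k) + of_int (snd k) * snd (c k) = 0"
    and cs: "sq_summable (Apow L s c)"
    using assms(1) unfolding inDom_def inH_def by auto
  have "real_valued (Apow L t c)"
    using c(3) unfolding real_valued_def Apow_def lam_def by simp
  moreover have "of_int (fst k) * fst (Apow L t c k) + of_int (snd k) * snd (Apow L t c k) = 0"
    for k
    using c(4)[of k] unfolding Apow_def by (simp add: algebra_simps scaleR_right_distrib[symmetric])
  moreover have "sq_summable (Apow L t c)"
    using sq_summable_Apow_mono[OF c(1) cs assms(2,3)] .
  ultimately show ?thesis
    using c(2) cs unfolding inDom_def inH_def Apow_Apow by (simp add: Apow_def)
qed

section \<open>Agmon's inequality and the Wiener norm\<close>

lemma sq_summable_finite_support:
  assumes "finite S" and "\<And>k. k \<notin> S \<Longrightarrow> c k = (0, 0)"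
  shows "sq_summable c"
  unfolding sq_summable_def
  by (rule summable_on_cong_neutral[where S=S, THEN iffD1])
    (use assms in \<open>auto simp: zero_prod_def\<close>)

text \<open>The coefficients of the function \<open>\<Sum>k\<in>S. |c(k)| e\<^sub>k\<close>, whose value at the origin is
  \<open>\<Sum>k\<in>S. |c(k)|\<close>.\<close>
definition abs_restrict :: "coef \<Rightarrow> (int \<times> int) set \<Rightarrow> coef" where
  "abs_restrict c S k = (if k \<in> S then (complex_of_real (norm (c k)), 0) else (0, 0))"

lemma agmon_sum_norm_le:
  assumes ag: "agmon_const L cA" and S: "finite S" "\<And>a b. (a, b) \<in> S \<Longrightarrow> (-a, -b) \<in> S"
    and c: "c (0, 0) = (0, 0)" "\<And>a b. norm (c (-a, -b)) = norm (c (a, b))"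
  shows "(\<Sum>k\<in>S. norm (c k))
    \<le> cA * sqrt (hnorm L (abs_restrict c S)) * sqrt (hnorm L (Apow L 1 (abs_restrict c S)))"
proof -
  define d where "d = abs_restrict c S"
  have "(-a, -b) \<in> S \<longleftrightarrow> (a, b) \<in> S" for a b
    using S(2)[of a b] S(2)[of "-a" "-b"] by auto
  then have "real_valued d"
    unfolding real_valued_def d_def abs_restrict_def by (simp add: c(2))
  moreover have "d (0, 0) = (0, 0)"
    unfolding d_def abs_restrict_def using c(1) by simp
  moreover have "sq_summable d" and "sq_summable (Apow L 1 d)"
    by (rule sq_summable_finite_support[OF S(1)], simp add: d_def abs_restrict_def Apow_def)+
  ultimately have agmon:
      "norm (feval L d (0, 0)) \<le> cA * sqrt (hnorm L d) * sqrt (hnorm L (Apow L 1 d))"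
    using ag unfolding agmon_const_def by blast
  have "fst (feval L d (0, 0)) = (\<Sum>\<^sub>\<infinity>k. fst (d k))"
    unfolding feval_def ef_def by simp
  also have "\<dots> = (\<Sum>\<^sub>\<infinity>k\<in>S. fst (d k))"
    by (rule infsum_cong_neutral) (auto simp: d_def abs_restrict_def)
  also have "\<dots> = complex_of_real (\<Sum>k\<in>S. norm (c k))"
    using S(1) by (simp add: d_def abs_restrict_def)
  finally have "(\<Sum>k\<in>S. norm (c k)) = norm (fst (feval L d (0, 0)))"
    by (simp only: norm_of_real) (simp add: sum_nonneg)
  also have "\<dots> \<le> norm (feval L d (0, 0))"
    using norm_fst_le[of "fst (feval L d (0, 0))" "snd (feval L d (0, 0))"] by simp
  finally show ?thesis using agmon unfolding d_def by linarith
qed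

text \<open>Test Agmon's inequality on \<open>(2 cos(2\<pi>x\<^sub>1/L), 0)\<close>.\<close>
lemma agmon_const_nonneg:
  assumes "agmon_const L cA"
  shows "cA \<ge> 0"
proof (rule ccontr)
  assume "\<not> cA \<ge> 0"
  define S where "S = {(1, 0), (-1, 0) :: int \<times> int}"
  define c :: coef where "c k = (if k \<in> S then (1, 0) else (0, 0))" for k
  have "(\<Sum>k\<in>S. norm (c k))
      \<le> cA * sqrt (hnorm L (abs_restrict c S)) * sqrt (hnorm L (Apow L 1 (abs_restrict c S)))"
    by (rule agmon_sum_norm_le[OF assms]) (auto simp: S_def c_def zero_prod_def)
  also have "\<dots> \<le> 0"
    using \<open>\<not> cA \<ge> 0\<close> hnorm_nonneg by (intro mult_nonpos_nonneg) auto
  finally show False by (simp add: S_def c_def)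
qed

lemma norm_abs_restrict_le: "norm (abs_restrict c S k) \<le> norm (c k)"
  unfolding abs_restrict_def by (simp add: norm_Pair)

lemma norm_Apow_abs_restrict_le: "norm (Apow L s (abs_restrict c S) k) \<le> norm (Apow L s c k)"
  unfolding norm_Apow by (simp add: mult_left_mono norm_abs_restrict_le)

lemma agmon_summable_norm:
  assumes ag: "agmon_const L cA"
    and c: "c (0, 0) = (0, 0)" "real_valued c" "sq_summable c" "sq_summable (Apow L 1 c)"
  shows "(\<lambda>k. norm (c k)) summable_on UNIV"
    and "(\<Sum>\<^sub>\<infinity>k. norm (c k)) \<le> cA * sqrt (hnorm L c) * sqrt (hnorm L (Apow L 1 c))"
proof -
  have sym: "norm (c (-a, -b)) = norm (c (a, b))" for a b
    using c(2) unfolding real_valued_def by (simp add: norm_prod_def)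
  have "(\<Sum>k\<in>F. norm (c k)) \<le> cA * sqrt (hnorm L c) * sqrt (hnorm L (Apow L 1 c))"
    if F: "finite F" for F
  proof -
    define S where "S = F \<union> (\<lambda>(a, b). (-a, -b)) ` F"
    have S: "finite S" "\<And>a b. (a, b) \<in> S \<Longrightarrow> (-a, -b) \<in> S"
      unfolding S_def using F by (auto simp: image_iff)
    have "(\<Sum>k\<in>F. norm (c k)) \<le> (\<Sum>k\<in>S. norm (c k))"
      by (rule sum_mono2[OF S(1)]) (auto simp: S_def)
    also have "\<dots>
        \<le> cA * sqrt (hnorm L (abs_restrict c S)) * sqrt (hnorm L (Apow L 1 (abs_restrict c S)))"
      using S c(1) sym by (rule agmon_sum_norm_le[OF ag])
    also have "\<dots> \<le> cA * sqrt (hnorm L c) * sqrt (hnorm L (Apow L 1 c))"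
      using agmon_const_nonneg[OF ag] hnorm_nonneg
        hnorm_mono[OF c(3) norm_abs_restrict_le[of c S]]
        hnorm_mono[OF c(4) norm_Apow_abs_restrict_le[of L 1 c S]]
      by (intro mult_mono mult_left_mono real_sqrt_le_mono) auto
    finally show ?thesis .
  qed
  then show "(\<lambda>k. norm (c k)) summable_on UNIV"
    and "(\<Sum>\<^sub>\<infinity>k. norm (c k)) \<le> cA * sqrt (hnorm L c) * sqrt (hnorm L (Apow L 1 c))"
    using nonneg_bounded_sums_summable_on[of "\<lambda>k. norm (c k)"] by auto
qed

lemma inDom_summable_norm:
  assumes "agmon_const L cA" and "inDom L s c" and "1 \<le> s"
  shows "(\<lambda>k. norm (c k)) summable_on UNIV"
    and "(\<Sum>\<^sub>\<infinity>k. norm (c k)) \<le> cA * sqrt (hnorm L c) * sqrt (hnorm L (Apow L 1 c))"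
  using inDom_mono[OF assms(2) _ assms(3)] agmon_summable_norm[OF assms(1), of c]
  unfolding inDom_def inH_def by auto

section \<open>The bilinear term\<close>

lemma sq_sub_projection_le:
  fixes x y a b :: real
  assumes "a\<^sup>2 + b\<^sup>2 > 0"
  shows "(x - (a * x + b * y) / (a\<^sup>2 + b\<^sup>2) * a)\<^sup>2 + (y - (a * x + b * y) / (a\<^sup>2 + b\<^sup>2) * b)\<^sup>2
    \<le> x\<^sup>2 + y\<^sup>2"
proof -
  define n m where "n = a\<^sup>2 + b\<^sup>2" and "m = a * x + b * y"
  define t where "t = m / n"
  have n0: "n > 0" using assms unfolding n_def .
  have "(x - t * a)\<^sup>2 + (y - t * b)\<^sup>2 = x\<^sup>2 + y\<^sup>2 - 2 * t * m + t\<^sup>2 * n"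
    unfolding n_def m_def by (simp add: power2_eq_square algebra_simps)
  also have "\<dots> = x\<^sup>2 + y\<^sup>2 - m\<^sup>2 / n"
    using n0 unfolding t_def by (simp add: power2_eq_square field_simps)
  also have "\<dots> \<le> x\<^sup>2 + y\<^sup>2"
    using n0 by simp
  finally show ?thesis unfolding t_def n_def m_def .
qed

lemma norm_leray_le: "norm (leray f k) \<le> norm (f k)"
proof (cases "k = (0, 0)")
  case True
  then show ?thesis by (simp add: leray_def)
next
  case False
  obtain a b where k: "k = (a, b)" by (cases k)
  obtain x y where f: "f k = (x, y)" by (cases "f k")
  define n where "n = (real_of_int a)\<^sup>2 + (real_of_int b)\<^sup>2"
  have n0: "n > 0"
    using False unfolding k n_def by (auto simp: sum_power2_gt_zero_iff)
  define p where "p = (of_int a * x + of_int b * y) / of_int (a\<^sup>2 + b\<^sup>2)"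
  have leray: "leray f k = (x - p * of_int a, y - p * of_int b)"
    using False f unfolding leray_def k p_def by (auto simp: Let_def)
  have Re_p: "Re p = (a * Re x + b * Re y) / n" and Im_p: "Im p = (a * Im x + b * Im y) / n"
    unfolding p_def n_def by (simp_all flip: of_int_power)
  have "(norm (leray f k))\<^sup>2
      = (Re x - Re p * a)\<^sup>2 + (Re y - Re p * b)\<^sup>2 + ((Im x - Im p * a)\<^sup>2 + (Im y - Im p * b)\<^sup>2)"
    unfolding leray by (simp add: norm_Pair cmod_power2)
  also have "\<dots> \<le> ((Re x)\<^sup>2 + (Re y)\<^sup>2) + ((Im x)\<^sup>2 + (Im y)\<^sup>2)"
    using n0 unfolding Re_p Im_p n_def by (intro add_mono sq_sub_projection_le)
  also have "\<dots> = (norm (f k))\<^sup>2"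
    unfolding f by (simp add: norm_Pair cmod_power2)
  finally show ?thesis by (rule power2_le_imp_le) simp
qed

lemma cmod_dot_freq_le:
  assumes "L > 0"
  shows "cmod (a * (2 * pi * \<i> * of_int l1 / L) + b * (2 * pi * \<i> * of_int l2 / L))
    \<le> norm (a, b) * wavenum L (l1, l2)"
proof -
  have "a * (2 * pi * \<i> * of_int l1 / L) + b * (2 * pi * \<i> * of_int l2 / L)
      = (2 * pi * \<i> / L) * (a * of_int l1 + b * of_int l2)"
    by (simp add: algebra_simps add_divide_distrib)
  also have "cmod \<dots> = 2 * pi / L * cmod (a * of_int l1 + b * of_int l2)"
    using assms by (simp add: norm_mult norm_divide)
  also have "\<dots> \<le> 2 * pi / L * (cmod a * \<bar>real_of_int l1\<bar> + cmod b * \<bar>real_of_int l2\<bar>)"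
    using assms norm_triangle_ineq[of "a * of_int l1" "b * of_int l2"]
    by (intro mult_left_mono) (simp_all add: norm_mult)
  also have "\<dots> \<le> 2 * pi / L * (norm (cmod a, cmod b) * norm (\<bar>real_of_int l1\<bar>, \<bar>real_of_int l2\<bar>))"
    using assms norm_cauchy_schwarz[of "(cmod a, cmod b)" "(\<bar>real_of_int l1\<bar>, \<bar>real_of_int l2\<bar>)"]
    by (intro mult_left_mono) auto
  also have "\<dots> = norm (a, b) * wavenum L (l1, l2)"
    unfolding wavenum_eq_norm[OF assms] by (simp add: norm_Pair)
  finally show ?thesis .
qed

lemma norm_Pair_mult_left: "norm (z * a, z * b) = cmod z * norm (a, b)"
  by (simp add: norm_Pair norm_mult power_mult_distrib real_sqrt_mult flip: distrib_left)

lemma norm_advect_le: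
  assumes "L > 0" and "(\<lambda>j. norm (u j) * norm (Apow L (1/2) v (k - j))) summable_on UNIV"
  shows "norm (advect L u v k) \<le> convolution (\<lambda>j. norm (u j)) (\<lambda>j. norm (Apow L (1/2) v j)) k"
proof -
  define s where "s j = fst (u j) * (2 * pi * \<i> * of_int (fst k - fst j) / L)
                      + snd (u j) * (2 * pi * \<i> * of_int (snd k - snd j) / L)" for j
  define t where "t j = (s j * fst (v (k - j)), s j * snd (v (k - j)))" for j
  have kj: "(fst k - fst j, snd k - snd j) = k - j" for j by (simp add: prod_eq_iff)
  have t_le: "norm (t j) \<le> norm (u j) * norm (Apow L (1/2) v (k - j))" for j
  proof -
    have "norm (t j) = cmod (s j) * norm (v (k - j))"
      unfolding t_def norm_Pair_mult_left by simp
    also have "\<dots> \<le> norm (u j) * wavenum L (k - j) * norm (v (k - j))"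
      using cmod_dot_freq_le[OF assms(1),
          of "fst (u j)" "fst k - fst j" "snd (u j)" "snd k - snd j"]
      unfolding s_def kj by (intro mult_right_mono) simp_all
    also have "\<dots> = norm (u j) * norm (Apow L (1/2) v (k - j))"
      using norm_Apow_half_nat[of 1 L v "k - j"] by simp
    finally show ?thesis .
  qed
  have "t summable_on UNIV"
    by (rule abs_summable_summable, rule summable_on_comparison_test[OF assms(2)])
      (use t_le in auto)
  then have t: "(t has_sum (\<Sum>\<^sub>\<infinity>j. t j)) UNIV" by (rule has_sum_infsum)
  have "advect L u v k = ((\<Sum>\<^sub>\<infinity>j. fst (t j)), (\<Sum>\<^sub>\<infinity>j. snd (t j)))"
    unfolding advect_def Let_def t_def s_def kj by simp
  also have "\<dots> = (\<Sum>\<^sub>\<infinity>j. t j)"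
    using infsumI[OF has_sum_bounded_linear[OF bounded_linear_fst t]]
      infsumI[OF has_sum_bounded_linear[OF bounded_linear_snd t]] by (simp add: prod_eq_iff)
  also have "norm \<dots> \<le> convolution (\<lambda>j. norm (u j)) (\<lambda>j. norm (Apow L (1/2) v j)) k"
    unfolding convolution_def by (rule norm_infsum_le[OF t has_sum_infsum[OF assms(2)] t_le])
  finally show ?thesis .
qed

lemma norm_Bop_le:
  assumes "L > 0" and U: "(\<lambda>j. norm (u j)) summable_on UNIV"
    and Q: "(\<lambda>j. norm (Apow L (1/2) v j)) summable_on UNIV"
  shows "norm (Bop L u v k) \<le> convolution (\<lambda>j. norm (u j)) (\<lambda>j. norm (Apow L (1/2) v j)) k"
proof -
  have "norm (Apow L (1/2) v j) \<le> (\<Sum>\<^sub>\<infinity>j. norm (Apow L (1/2) v j))" for j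
    using finite_sum_le_infsum[OF Q, of "{j}"] by simp
  then have "(\<lambda>j. norm (u j) * norm (Apow L (1/2) v (k - j))) summable_on UNIV"
    by (intro summable_on_convolution[OF U]) auto
  then show ?thesis
    unfolding Bop_def by (rule order.trans[OF norm_leray_le norm_advect_le[OF assms(1)]])
qed

lemma cmod_inner_Pair_le: "cmod (a1 * cnj b1 + a2 * cnj b2) \<le> norm (a1, a2) * norm (b1, b2)"
proof -
  have "cmod (a1 * cnj b1 + a2 * cnj b2) \<le> cmod a1 * cmod b1 + cmod a2 * cmod b2"
    using norm_triangle_ineq[of "a1 * cnj b1" "a2 * cnj b2"] by (simp add: norm_mult)
  also have "\<dots> \<le> norm (cmod a1, cmod a2) * norm (cmod b1, cmod b2)"
    using norm_cauchy_schwarz[of "(cmod a1, cmod a2)" "(cmod b1, cmod b2)"] by simp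
  finally show ?thesis by (simp add: norm_Pair)
qed

lemma cmod_l2inner_le:
  assumes "\<And>k. norm (f k) * norm (g k) \<le> h k" and "\<And>F. finite F \<Longrightarrow> sum h F \<le> B"
  shows "cmod (l2inner L f g) \<le> L\<^sup>2 * B"
proof -
  define z where "z k = fst (f k) * cnj (fst (g k)) + snd (f k) * cnj (snd (g k))" for k
  have z_le: "norm (z k) \<le> h k" for k
    using cmod_inner_Pair_le[of "fst (f k)" "fst (g k)" "snd (f k)" "snd (g k)"] assms(1)[of k]
    unfolding z_def by simp
  have "sum (\<lambda>k. norm (z k)) F \<le> B" if "finite F" for F
    using sum_mono[of F "\<lambda>k. norm (z k)" h] z_le assms(2)[OF that] by (meson order.trans)
  then have "(\<lambda>k. norm (z k)) summable_on UNIV" and "(\<Sum>\<^sub>\<infinity>k. norm (z k)) \<le> B"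
    using nonneg_bounded_sums_summable_on[of "\<lambda>k. norm (z k)"] by auto
  then have "cmod (\<Sum>\<^sub>\<infinity>k. z k) \<le> B"
    using norm_infsum_bound[of z UNIV] by linarith
  then show ?thesis
    unfolding l2inner_def z_def by (simp add: norm_mult norm_power mult_left_mono)
qed

lemma cmod_l2inner_Bop_le:
  assumes "L > 0" and "n > 0"
    and u: "(\<lambda>k. norm (u k)) summable_on UNIV" "sq_summable (Apow L (real n / 2) u)"
    and v: "(\<lambda>k. norm (Apow L (1/2) v k)) summable_on UNIV"
      "sq_summable (Apow L (real n / 2) (Apow L (1/2) v))"
    and w: "sq_summable (Apow L (real n / 2) w)"
  shows "cmod (l2inner L (Bop L u v) (Apow L (real n / 2) (Apow L (real n / 2) w)))
    \<le> 2 ^ n * ((\<Sum>\<^sub>\<infinity>k. norm (Apow L (1/2) v k)) * hnorm L (Apow L (real n / 2) u)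
               + (\<Sum>\<^sub>\<infinity>k. norm (u k)) * hnorm L (Apow L (real n / 2) (Apow L (1/2) v)))
      * hnorm L (Apow L (real n / 2) w)"
proof -
  let ?\<kappa> = "wavenum L"
  define U Q W where "U = (\<lambda>k. norm (u k))" and "Q = (\<lambda>k. norm (Apow L (1/2) v k))"
    and "W = (\<lambda>k. norm (Apow L (real n / 2) w k))"
  have sq: "(\<lambda>k. (?\<kappa> k ^ n * U k)\<^sup>2) summable_on UNIV" "(\<lambda>k. (?\<kappa> k ^ n * Q k)\<^sup>2) summable_on UNIV"
    "(\<lambda>k. (W k)\<^sup>2) summable_on UNIV"
    using u(2) v(2) w unfolding sq_summable_def U_def Q_def W_def norm_Apow_half_nat[OF assms(2)] .
  have "norm (Bop L u v k) * norm (Apow L (real n / 2) (Apow L (real n / 2) w) k)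
      \<le> W k * (?\<kappa> k ^ n * convolution U Q k)" for k
  proof -
    have "norm (Bop L u v k) \<le> convolution U Q k"
      using norm_Bop_le[OF assms(1) u(1) v(1)] unfolding U_def Q_def .
    then have "norm (Bop L u v k) * (?\<kappa> k ^ n * W k) \<le> convolution U Q k * (?\<kappa> k ^ n * W k)"
      by (rule mult_right_mono) (simp add: W_def wavenum_nonneg)
    then show ?thesis
      unfolding W_def norm_Apow_half_nat[OF assms(2)] by (simp add: algebra_simps)
  qed
  then have "cmod (l2inner L (Bop L u v) (Apow L (real n / 2) (Apow L (real n / 2) w)))
      \<le> L\<^sup>2 * (2 ^ n * ((\<Sum>\<^sub>\<infinity>k. Q k) * sqrt (\<Sum>\<^sub>\<infinity>k. (?\<kappa> k ^ n * U k)\<^sup>2)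
              + (\<Sum>\<^sub>\<infinity>k. U k) * sqrt (\<Sum>\<^sub>\<infinity>k. (?\<kappa> k ^ n * Q k)\<^sup>2)) * sqrt (\<Sum>\<^sub>\<infinity>k. (W k)\<^sup>2))"
    by (rule cmod_l2inner_le, intro sum_mult_weighted_convolution_le)
      (use wavenum_nonneg wavenum_triangle[OF assms(1)] u(1) v(1) sq
        in \<open>auto simp: U_def Q_def W_def\<close>)
  also have "\<dots> = 2 ^ n * ((\<Sum>\<^sub>\<infinity>k. Q k) * hnorm L (Apow L (real n / 2) u)
               + (\<Sum>\<^sub>\<infinity>k. U k) * hnorm L (Apow L (real n / 2) (Apow L (1/2) v)))
      * hnorm L (Apow L (real n / 2) w)"
    unfolding hnorm_eq[OF assms(1)] U_def Q_def W_def norm_Apow_half_nat[OF assms(2)]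
    by (simp add: power2_eq_square algebra_simps)
  finally show ?thesis unfolding U_def Q_def .
qed

theorem lemma5p1:
  fixes L cA :: real and \<alpha> :: nat and u v w :: coef
  assumes "L > 0" and "\<alpha> > 3" and "agmon_const L cA"
    and "inDom L (real \<alpha> / 2) u"
    and "inDom L ((real \<alpha> + 1) / 2) v"
    and "inDom L (real \<alpha>) w"
  shows "cmod (l2inner L (Bop L u v) (Apow L (real \<alpha>) w))
    \<le> 2 ^ \<alpha> * cA *
       (sqrt (hnorm L u) * sqrt (hnorm L (Apow L 1 u)) * hnorm L (Apow L ((1 + real \<alpha>) / 2) v)
        + hnorm L (Apow L (real \<alpha> / 2) u) * sqrt (hnorm L (Apow L (1 / 2) v))
            * sqrt (hnorm L (Apow L (3 / 2) v)))
       * hnorm L (Apow L (real \<alpha> / 2) w)"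
proof -
  have \<alpha>: "\<alpha> > 0" "1 \<le> real \<alpha> / 2" using assms(2) by auto
  have vD: "inDom L (real \<alpha> / 2) (Apow L (1/2) v)"
    using inDom_Apow[OF assms(5), of "1/2"] by (simp add: add_divide_distrib)
  have wD: "inDom L (real \<alpha> / 2) w"
    by (rule inDom_mono[OF assms(6)]) auto
  have Apow_v: "Apow L ((1 + real \<alpha>) / 2) v = Apow L (real \<alpha> / 2) (Apow L (1/2) v)"
    and Apow_w: "Apow L (real \<alpha>) w = Apow L (real \<alpha> / 2) (Apow L (real \<alpha> / 2) w)"
    and Apow_3_2: "Apow L 1 (Apow L (1/2) v) = Apow L (3/2) v"
    unfolding Apow_Apow by (simp_all add: add_divide_distrib add.commute)
  note U = inDom_summable_norm[OF assms(3,4) \<alpha>(2)]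
  note Q = inDom_summable_norm[OF assms(3) vD \<alpha>(2), unfolded Apow_3_2]
  have "cmod (l2inner L (Bop L u v) (Apow L (real \<alpha>) w))
      \<le> 2 ^ \<alpha> * ((\<Sum>\<^sub>\<infinity>k. norm (Apow L (1/2) v k)) * hnorm L (Apow L (real \<alpha> / 2) u)
        + (\<Sum>\<^sub>\<infinity>k. norm (u k)) * hnorm L (Apow L ((1 + real \<alpha>) / 2) v))
      * hnorm L (Apow L (real \<alpha> / 2) w)"
    unfolding Apow_v Apow_w
    by (rule cmod_l2inner_Bop_le[OF assms(1) \<alpha>(1) U(1) _ Q(1)])
      (use assms(4) vD wD in \<open>simp_all add: inDom_def\<close>)
  also have "\<dots> \<le> 2 ^ \<alpha> * (cA * sqrt (hnorm L (Apow L (1/2) v)) * sqrt (hnorm L (Apow L (3/2) v))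
          * hnorm L (Apow L (real \<alpha> / 2) u)
        + cA * sqrt (hnorm L u) * sqrt (hnorm L (Apow L 1 u))
          * hnorm L (Apow L ((1 + real \<alpha>) / 2) v))
      * hnorm L (Apow L (real \<alpha> / 2) w)"
    using Q(2) U(2) hnorm_nonneg by (intro mult_right_mono mult_left_mono add_mono) auto
  finally show ?thesis by (simp add: algebra_simps)
qed

end
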